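(* Let $\Gamma$ be a connected finite simplicial graph with at least three vertices. Suppose there is a collection $\mathcal{G}$ of induced subgraphs $\Delta\subset\Gamma$ satisfying both of the following: (1) for each $\Delta\in\mathcal{G}$, $A(\Delta)$ has property $\mathbf{F}(\mathcal{H})$; (2) each two-edge segment of $\Gamma$ is contained in some $\Delta\in\mathcal{G}$. Then $A(\Gamma)$ has property $\mathbf{F}(\mathcal{H})$, where $\mathcal{H}=\{F_2,\mathbb{Z}^2\}$.
   Context: $A(\Gamma)$ is the right-angled Artin group of $\Gamma$: it is generated by the vertices of $\Gamma$, with relations that adjacent vertices commute. For an induced subgraph $\Delta$, $A(\Delta)$ is the subgroup generated by the vertices of $\Delta$. A subgraph is induced if it contains every edge of $\Gamma$ between two of its vertices. A two-edge segment is a subgraph consisting of vertices $u,v,w$ with $u\ne w$, an edge $uv$ and an edge $vw$. All actions on trees are simplicial and without inversions. A group $G$ has property $\mathbf{F}(\mathcal{H})$ if, whenever $G$ acts on a tree, either there is a global fixed point or some subgroup of $G$ isomorphic to $F_2$ or to $\mathbb{Z}^2$ fixes an edge. *)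

theory Defs
  imports "HOL-Algebra.Algebra"
begin

definition simple_graph :: "'v set \<Rightarrow> ('v \<Rightarrow> 'v \<Rightarrow> bool) \<Rightarrow> bool" where
  "simple_graph V E \<longleftrightarrow>
     (\<forall>x y. E x y \<longrightarrow> x \<in> V \<and> y \<in> V \<and> E y x \<and> x \<noteq> y)"

definition graph_connected :: "'v set \<Rightarrow> ('v \<Rightarrow> 'v \<Rightarrow> bool) \<Rightarrow> bool" where
  "graph_connected V E \<longleftrightarrow> (\<forall>x\<in>V. \<forall>y\<in>V. E\<^sup>*\<^sup>* x y)"

definition is_tree :: "'t set \<Rightarrow> ('t \<Rightarrow> 't \<Rightarrow> bool) \<Rightarrow> bool" where
  "is_tree T ET \<longleftrightarrow> T \<noteq> {} \<and> simple_graph T ET \<and> graph_connected T ET \<and>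
     \<not> (\<exists>c. length c \<ge> 3 \<and> distinct c \<and> (\<forall>i. i + 1 < length c \<longrightarrow> ET (c ! i) (c ! (i + 1)))
            \<and> ET (last c) (hd c))"

text \<open>Words over the alphabet of generators and their inverses: (v, True) is v,
  (v, False) is v inverse.\<close>
definition raag_words :: "'v set \<Rightarrow> ('v \<times> bool) list set" where
  "raag_words V = {w. fst ` set w \<subseteq> V}"

inductive raag_equiv :: "'v set \<Rightarrow> ('v \<Rightarrow> 'v \<Rightarrow> bool) \<Rightarrow>
    ('v \<times> bool) list \<Rightarrow> ('v \<times> bool) list \<Rightarrow> bool" for V E where
  refl: "w \<in> raag_words V \<Longrightarrow> raag_equiv V E w w"
| sym: "raag_equiv V E w w' \<Longrightarrow> raag_equiv V E w' w"
| trans: "raag_equiv V E w w' \<Longrightarrow> raag_equiv V E w' w'' \<Longrightarrow> raag_equiv V E w w''"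
| cancel: "xs \<in> raag_words V \<Longrightarrow> ys \<in> raag_words V \<Longrightarrow> v \<in> V \<Longrightarrow>
     raag_equiv V E (xs @ [(v, b), (v, \<not> b)] @ ys) (xs @ ys)"
| comm: "xs \<in> raag_words V \<Longrightarrow> ys \<in> raag_words V \<Longrightarrow> u \<in> V \<Longrightarrow> v \<in> V \<Longrightarrow> E u v \<Longrightarrow>
     raag_equiv V E (xs @ [(u, b), (v, c)] @ ys) (xs @ [(v, c), (u, b)] @ ys)"

definition raag_rel :: "'v set \<Rightarrow> ('v \<Rightarrow> 'v \<Rightarrow> bool) \<Rightarrow> (('v \<times> bool) list \<times> ('v \<times> bool) list) set" where
  "raag_rel V E = {(x, y). raag_equiv V E x y}"

definition raag_mult :: "'v set \<Rightarrow> ('v \<Rightarrow> 'v \<Rightarrow> bool) \<Rightarrow>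
    ('v \<times> bool) list set \<Rightarrow> ('v \<times> bool) list set \<Rightarrow> ('v \<times> bool) list set" where
  "raag_mult V E A B = raag_rel V E `` {(SOME a. a \<in> A) @ (SOME b. b \<in> B)}"

definition raag :: "'v set \<Rightarrow> ('v \<Rightarrow> 'v \<Rightarrow> bool) \<Rightarrow> ('v \<times> bool) list set monoid" where
  "raag V E = \<lparr> carrier = raag_words V // raag_rel V E,
                monoid.mult = raag_mult V E,
                one = raag_rel V E `` {[]} \<rparr>"

definition raag_gen :: "'v set \<Rightarrow> ('v \<Rightarrow> 'v \<Rightarrow> bool) \<Rightarrow> 'v \<Rightarrow> ('v \<times> bool) list set" where
  "raag_gen V E v = raag_rel V E `` {[(v, True)]}"

text \<open>For an induced subgraph with vertex set D, A(D) is the subgroup of A(V,E)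
  generated by the vertices of D.\<close>
definition raag_sub :: "'v set \<Rightarrow> ('v \<Rightarrow> 'v \<Rightarrow> bool) \<Rightarrow> 'v set \<Rightarrow> ('v \<times> bool) list set monoid" where
  "raag_sub V E D = (raag V E)\<lparr>carrier := generate (raag V E) (raag_gen V E ` D)\<rparr>"

definition F2_group :: "(nat \<times> bool) list set monoid" where
  "F2_group = raag {0, 1} (\<lambda>_ _. False)"

definition Z2_group :: "(int \<times> int) monoid" where
  "Z2_group = DirProd integer_group integer_group"

definition tree_action :: "('a, 'm) monoid_scheme \<Rightarrow> 't set \<Rightarrow> ('t \<Rightarrow> 't \<Rightarrow> bool)
    \<Rightarrow> ('a \<Rightarrow> 't \<Rightarrow> 't) \<Rightarrow> bool" where
  "tree_action G T ET \<phi> \<longleftrightarrow> group_action G T \<phi> \<and>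
     (\<forall>g\<in>carrier G. \<forall>x y. ET x y \<longrightarrow> ET (\<phi> g x) (\<phi> g y)) \<and>
     (\<forall>g\<in>carrier G. \<forall>x y. ET x y \<longrightarrow> \<not> (\<phi> g x = y \<and> \<phi> g y = x))"

definition prop_FH :: "('a, 'm) monoid_scheme \<Rightarrow> 't itself \<Rightarrow> bool" where
  "prop_FH G _ \<longleftrightarrow>
     (\<forall>(T :: 't set) ET \<phi>. is_tree T ET \<and> tree_action G T ET \<phi> \<longrightarrow>
        (\<exists>x\<in>T. \<forall>g\<in>carrier G. \<phi> g x = x) \<or>
        (\<exists>H x y. subgroup H G \<and> (G\<lparr>carrier := H\<rparr> \<cong> F2_group \<or> G\<lparr>carrier := H\<rparr> \<cong> Z2_group)
           \<and> ET x y \<and> (\<forall>h\<in>H. \<phi> h x = x \<and> \<phi> h y = y)))"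

end

theory Submission
  imports Defs
begin

text \<open>Suppose A(\<Gamma>) acts on a tree so that no subgroup isomorphic to F2 or \<int>^2 fixes an
  edge. Property F(\<H>) of the subgroups A(\<Delta>) gives the three generators of every two-edge
  segment a common fixed point. Two adjacent generators span a copy of \<int>^2 (detected by
  exponent sums); if they had two distinct common fixed points, this \<int>^2 would also fix the
  first edge of the unique geodesic joining them, so they have at most one. Starting from the
  common fixed point of one segment, these two facts propagate it along the connected graph
  \<Gamma> to every generator, and hence to all of A(\<Gamma>).\<close>

lemma raag_equiv_words:
  "raag_equiv V E x y \<Longrightarrow> x \<in> raag_words V \<and> y \<in> raag_words V"
  by (induction rule: raag_equiv.induct) (auto simp: raag_words_def)

lemma raag_words_Nil [simp]: "[] \<in> raag_words V"
  and raag_words_Cons [simp]: "a # w \<in> raag_words V \<longleftrightarrow> fst a \<in> V \<and> w \<in> raag_words V"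
  and raag_words_append [simp]: "w @ w' \<in> raag_words V \<longleftrightarrow> w \<in> raag_words V \<and> w' \<in> raag_words V"
  by (auto simp: raag_words_def)

lemma raag_equiv_context:
  assumes "raag_equiv V E w w'" "xs \<in> raag_words V" "ys \<in> raag_words V"
  shows "raag_equiv V E (xs @ w @ ys) (xs @ w' @ ys)"
  using assms
proof (induction rule: raag_equiv.induct)
  case (refl w)
  then show ?case by (simp add: raag_equiv.refl)
next
  case (sym w w')
  then show ?case by (blast intro: raag_equiv.sym)
next
  case (trans w w' w'')
  then show ?case by (blast intro: raag_equiv.trans)
next
  case (cancel as bs v b)
  then show ?case using raag_equiv.cancel[of "xs @ as" V "bs @ ys" v E b] by simp
next
  case (comm as bs u v b c)
  then show ?case using raag_equiv.comm[of "xs @ as" V "bs @ ys" u v E b c] by simp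
qed

lemma raag_equiv_append:
  assumes "raag_equiv V E w w'" "raag_equiv V E u u'"
  shows "raag_equiv V E (w @ u) (w' @ u')"
proof (rule raag_equiv.trans)
  show "raag_equiv V E (w @ u) (w' @ u)"
    using raag_equiv_context[OF assms(1) raag_words_Nil, of u] raag_equiv_words[OF assms(2)] by simp
  show "raag_equiv V E (w' @ u) (w' @ u')"
    using raag_equiv_context[OF assms(2) _ raag_words_Nil, of w'] raag_equiv_words[OF assms(1)] by simp
qed

abbreviation raag_class :: "'v set \<Rightarrow> ('v \<Rightarrow> 'v \<Rightarrow> bool) \<Rightarrow> ('v \<times> bool) list \<Rightarrow> ('v \<times> bool) list set"
  where "raag_class V E w \<equiv> raag_rel V E `` {w}"

lemma equiv_raag_rel: "equiv (raag_words V) (raag_rel V E)"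
  unfolding equiv_def refl_on_def sym_def trans_def raag_rel_def
  using raag_equiv_words by (auto intro: raag_equiv.refl raag_equiv.sym raag_equiv.trans)

lemma raag_class_eq: "raag_equiv V E w w' \<Longrightarrow> raag_class V E w = raag_class V E w'"
  using equiv_class_eq[OF equiv_raag_rel] by (simp add: raag_rel_def)

lemma some_in_raag_class: "w \<in> raag_words V \<Longrightarrow> raag_equiv V E w (SOME w'. w' \<in> raag_class V E w)"
  by (rule someI2[of _ w]) (auto simp: raag_rel_def intro: raag_equiv.refl)

lemma carrier_raag: "A \<in> carrier (raag V E) \<longleftrightarrow> (\<exists>w\<in>raag_words V. A = raag_class V E w)"
  by (auto simp: raag_def quotient_def)

lemma raag_mult_class:
  assumes "w \<in> raag_words V" "u \<in> raag_words V"
  shows "raag_class V E w \<otimes>\<^bsub>raag V E\<^esub> raag_class V E u = raag_class V E (w @ u)"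
proof -
  have "raag_equiv V E (w @ u) ((SOME x. x \<in> raag_class V E w) @ (SOME x. x \<in> raag_class V E u))"
    by (intro raag_equiv_append some_in_raag_class assms)
  then show ?thesis
    by (simp add: raag_def raag_mult_def raag_class_eq)
qed

lemma raag_one: "\<one>\<^bsub>raag V E\<^esub> = raag_class V E []"
  by (simp add: raag_def)

definition raag_inv_word :: "('v \<times> bool) list \<Rightarrow> ('v \<times> bool) list" where
  "raag_inv_word w = rev (map (\<lambda>(v, b). (v, \<not> b)) w)"

lemma raag_inv_word_words [simp]: "raag_inv_word w \<in> raag_words V \<longleftrightarrow> w \<in> raag_words V"
  by (force simp: raag_inv_word_def raag_words_def)

lemma raag_equiv_inv_word_cancel:
  "w \<in> raag_words V \<Longrightarrow> raag_equiv V E (raag_inv_word w @ w) []"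
proof (induction w)
  case Nil
  then show ?case by (simp add: raag_inv_word_def raag_equiv.refl)
next
  case (Cons a w)
  obtain v b where a: "a = (v, b)" by fastforce
  have "raag_equiv V E (raag_inv_word w @ [(v, \<not> b), (v, \<not> \<not> b)] @ w) (raag_inv_word w @ w)"
    using Cons.prems a by (intro raag_equiv.cancel) auto
  with Cons show ?case by (auto simp: a raag_inv_word_def intro: raag_equiv.trans)
qed

lemma raag_is_group: "group (raag V E)"
proof (rule groupI)
  fix A B C
  assume "A \<in> carrier (raag V E)" "B \<in> carrier (raag V E)" "C \<in> carrier (raag V E)"
  then show "A \<otimes>\<^bsub>raag V E\<^esub> B \<otimes>\<^bsub>raag V E\<^esub> C = A \<otimes>\<^bsub>raag V E\<^esub> (B \<otimes>\<^bsub>raag V E\<^esub> C)"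
    by (auto simp: carrier_raag raag_mult_class)
next
  fix A assume "A \<in> carrier (raag V E)"
  then obtain w where w: "w \<in> raag_words V" "A = raag_class V E w"
    by (auto simp: carrier_raag)
  show "\<one>\<^bsub>raag V E\<^esub> \<otimes>\<^bsub>raag V E\<^esub> A = A"
    using w by (simp add: raag_one raag_mult_class)
  have "raag_class V E (raag_inv_word w) \<otimes>\<^bsub>raag V E\<^esub> A = \<one>\<^bsub>raag V E\<^esub>"
    using w raag_equiv_inv_word_cancel[OF w(1)] by (simp add: raag_mult_class raag_one raag_class_eq)
  then show "\<exists>B\<in>carrier (raag V E). B \<otimes>\<^bsub>raag V E\<^esub> A = \<one>\<^bsub>raag V E\<^esub>"
    using w(1) by (auto simp: carrier_raag
        intro!: bexI[of _ "raag_class V E (raag_inv_word w)"] bexI[of _ "raag_inv_word w"])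
qed (auto simp: carrier_raag raag_mult_class raag_one intro: raag_words_Nil)

lemma raag_inv_class:
  assumes "w \<in> raag_words V"
  shows "inv\<^bsub>raag V E\<^esub> (raag_class V E w) = raag_class V E (raag_inv_word w)"
proof (rule group.inv_equality[OF raag_is_group])
  show "raag_class V E (raag_inv_word w) \<otimes>\<^bsub>raag V E\<^esub> raag_class V E w = \<one>\<^bsub>raag V E\<^esub>"
    using assms raag_equiv_inv_word_cancel[OF assms]
    by (simp add: raag_mult_class raag_one raag_class_eq)
qed (use assms in \<open>auto simp: carrier_raag\<close>)

lemma raag_gen_carrier: "v \<in> V \<Longrightarrow> raag_gen V E v \<in> carrier (raag V E)"
  by (auto simp: carrier_raag raag_gen_def)

lemma raag_generate_gens: "generate (raag V E) (raag_gen V E ` V) = carrier (raag V E)"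
proof
  interpret group "raag V E" by (rule raag_is_group)
  show "generate (raag V E) (raag_gen V E ` V) \<subseteq> carrier (raag V E)"
    by (intro generate_incl) (auto intro: raag_gen_carrier)
  have "raag_class V E w \<in> generate (raag V E) (raag_gen V E ` V)" if "w \<in> raag_words V" for w
    using that
  proof (induction w)
    case Nil
    then show ?case using generate.one by (metis raag_one)
  next
    case (Cons a w)
    obtain v b where a: "a = (v, b)" by fastforce
    have v: "v \<in> V" using Cons.prems a by simp
    have "raag_class V E [(v, b)] \<in> generate (raag V E) (raag_gen V E ` V)"
    proof (cases b)
      case True
      then show ?thesis using v by (auto simp: raag_gen_def intro: generate.incl)
    next
      case False
      have "raag_class V E [(v, b)] = inv\<^bsub>raag V E\<^esub> (raag_gen V E v)"
        using v False by (simp add: raag_gen_def raag_inv_class raag_inv_word_def)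
      then show ?thesis using v by (auto intro: generate.inv)
    qed
    moreover have "raag_class V E (a # w) = raag_class V E [(v, b)] \<otimes>\<^bsub>raag V E\<^esub> raag_class V E w"
      using Cons.prems a by (simp add: raag_mult_class)
    ultimately show ?case using Cons by (auto intro: generate.eng)
  qed
  then show "carrier (raag V E) \<subseteq> generate (raag V E) (raag_gen V E ` V)"
    by (auto simp: carrier_raag)
qed

lemma raag_gens_commute:
  assumes "E u v" "u \<in> V" "v \<in> V"
  shows "raag_gen V E u \<otimes>\<^bsub>raag V E\<^esub> raag_gen V E v = raag_gen V E v \<otimes>\<^bsub>raag V E\<^esub> raag_gen V E u"
proof -
  have "raag_equiv V E ([] @ [(u, True), (v, True)] @ []) ([] @ [(v, True), (u, True)] @ [])"
    using assms by (intro raag_equiv.comm) auto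
  then show ?thesis
    using assms by (simp add: raag_gen_def raag_mult_class raag_class_eq)
qed

section \<open>Adjacent generators span \<int>^2\<close>

fun exp_sum :: "'v \<Rightarrow> ('v \<times> bool) list \<Rightarrow> int" where
  "exp_sum u [] = 0"
| "exp_sum u (a # w) = (if fst a = u then if snd a then 1 else -1 else 0) + exp_sum u w"

lemma exp_sum_append [simp]: "exp_sum u (w @ w') = exp_sum u w + exp_sum u w'"
  by (induction w) auto

lemma exp_sum_raag_equiv: "raag_equiv V E w w' \<Longrightarrow> exp_sum u w = exp_sum u w'"
  by (induction rule: raag_equiv.induct) auto

definition raag_exp_sums :: "'v \<Rightarrow> 'v \<Rightarrow> ('v \<times> bool) list set \<Rightarrow> int \<times> int" where
  "raag_exp_sums u v A = (exp_sum u (SOME w. w \<in> A), exp_sum v (SOME w. w \<in> A))"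

lemma raag_exp_sums_class:
  "w \<in> raag_words V \<Longrightarrow> raag_exp_sums u v (raag_class V E w) = (exp_sum u w, exp_sum v w)"
  unfolding raag_exp_sums_def using some_in_raag_class[of w V E] exp_sum_raag_equiv by metis

lemma Z2_group_is_group: "group Z2_group"
  unfolding Z2_group_def by (intro DirProd_group group_integer_group)

lemma carrier_Z2_group [simp]: "carrier Z2_group = UNIV"
  and mult_Z2_group [simp]: "z \<otimes>\<^bsub>Z2_group\<^esub> z' = (fst z + fst z', snd z + snd z')"
  by (simp_all add: Z2_group_def DirProd_def integer_group_def split: prod.splits)

lemma raag_exp_sums_hom: "raag_exp_sums u v \<in> hom (raag V E) Z2_group"
  by (rule homI) (auto simp: carrier_raag raag_mult_class raag_exp_sums_class)

lemma int_pow_Z2_group: "z [^]\<^bsub>Z2_group\<^esub> (n::int) = (n * fst z, n * snd z)"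
proof -
  have "fst \<in> hom Z2_group integer_group" "snd \<in> hom Z2_group integer_group"
    by (auto intro: homI)
  then show ?thesis
    using hom_int_pow[OF _ _ Z2_group_is_group group_integer_group] by (simp add: prod_eq_iff)
qed

lemma (in group) int_pow_commute_right:
  assumes "x \<in> carrier G" "y \<in> carrier G" "x \<otimes> y = y \<otimes> x"
  shows "x [^] (a::int) \<otimes> y = y \<otimes> x [^] a"
proof -
  have pow: "x [^] n \<otimes> y = y \<otimes> x [^] n" for n :: nat
    by (rule group_commutes_pow[OF assms(3,1,2)])
  then have "inv (x [^] n) \<otimes> y = y \<otimes> inv (x [^] n)" for n :: nat
    using assms by (simp add: inv_solve_left inv_solve_right m_assoc)
  with pow show ?thesis
    by (simp only: int_pow_def2 split: if_split) simp
qed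

lemma (in group) int_pow_commute:
  assumes "x \<in> carrier G" "y \<in> carrier G" "x \<otimes> y = y \<otimes> x"
  shows "x [^] (a::int) \<otimes> y [^] (b::int) = y [^] b \<otimes> x [^] a"
proof -
  have "y \<otimes> x [^] a = x [^] a \<otimes> y" by (rule int_pow_commute_right[OF assms, symmetric])
  then have "y [^] b \<otimes> x [^] a = x [^] a \<otimes> y [^] b"
    using assms by (intro int_pow_commute_right) auto
  then show ?thesis ..
qed

lemma (in group) commuting_pair_generate_iso_Z2:
  assumes x: "x \<in> carrier G" and y: "y \<in> carrier G" and xy: "x \<otimes> y = y \<otimes> x"
    and f: "f \<in> hom G Z2_group" and fx: "f x = (1, 0)" and fy: "f y = (0, 1)"
  shows "G\<lparr>carrier := generate G {x, y}\<rparr> \<cong> Z2_group"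
proof -
  txt \<open>f is a left inverse of \<psi>, so \<psi> maps \<int>^2 isomorphically onto its image, which is the
    subgroup generated by x and y.\<close>
  define \<psi> where "\<psi> z = x [^] fst z \<otimes> y [^] snd z" for z :: "int \<times> int"
  have \<psi>_hom: "\<psi> \<in> hom Z2_group G"
  proof (rule homI)
    fix z z' :: "int \<times> int"
    have "\<psi> z \<otimes> \<psi> z' = x [^] fst z \<otimes> (y [^] snd z \<otimes> x [^] fst z') \<otimes> y [^] snd z'"
      using x y by (simp add: \<psi>_def m_assoc)
    also have "\<dots> = \<psi> (z \<otimes>\<^bsub>Z2_group\<^esub> z')"
      using x y by (simp add: \<psi>_def int_pow_commute[OF y x xy[symmetric]] int_pow_mult m_assoc)
    finally show "\<psi> (z \<otimes>\<^bsub>Z2_group\<^esub> z') = \<psi> z \<otimes> \<psi> z'" ..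
  qed (use x y in \<open>simp add: \<psi>_def\<close>)
  have f\<psi>: "f (\<psi> z) = z" for z
    using hom_int_pow[OF f x is_group Z2_group_is_group] hom_int_pow[OF f y is_group Z2_group_is_group]
      f x y
    by (simp add: \<psi>_def hom_mult fx fy int_pow_Z2_group)
  interpret \<psi>: group_hom Z2_group G \<psi>
    by (simp add: group_hom_def group_hom_axioms_def Z2_group_is_group is_group \<psi>_hom)
  have "generate G {x, y} \<subseteq> range \<psi>"
    using \<psi>.img_is_subgroup x y
    by (intro generate_subgroup_incl)
       (auto simp: \<psi>_def intro: image_eqI[of _ _ "(1, 0)"] image_eqI[of _ _ "(0, 1)"])
  moreover have "range \<psi> \<subseteq> generate G {x, y}"
  proof -
    have sub: "subgroup (generate G {x, y}) G" using x y by (intro generate_is_subgroup) auto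
    have "x \<in> generate G {x, y}" "y \<in> generate G {x, y}" by (auto intro: generate.incl)
    then show ?thesis
      by (auto simp: \<psi>_def intro!: subgroup.m_closed[OF sub] subgroup_int_pow_closed[OF sub])
  qed
  ultimately have gen: "generate G {x, y} = range \<psi>" by blast
  have "f \<in> iso (G\<lparr>carrier := range \<psi>\<rparr>) Z2_group"
  proof (rule isoI)
    show "f \<in> hom (G\<lparr>carrier := range \<psi>\<rparr>) Z2_group"
      using f \<psi>.hom_closed by (auto simp: hom_def)
    show "bij_betw f (carrier (G\<lparr>carrier := range \<psi>\<rparr>)) (carrier Z2_group)"
      by (auto simp: bij_betw_def inj_on_def f\<psi> image_iff intro: exI[of _ "\<psi> _"])
  qed
  then show ?thesis by (auto simp: gen is_iso_def)
qed

lemma raag_adjacent_gens_generate_Z2: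
  assumes "E u v" "u \<in> V" "v \<in> V" "u \<noteq> v"
  shows "(raag V E)\<lparr>carrier := generate (raag V E) {raag_gen V E u, raag_gen V E v}\<rparr> \<cong> Z2_group"
  using assms
  by (intro group.commuting_pair_generate_iso_Z2[OF raag_is_group raag_gen_carrier raag_gen_carrier
        raag_gens_commute raag_exp_sums_hom])
     (auto simp: raag_gen_def raag_exp_sums_class)

section \<open>Geodesics in trees\<close>

definition walk :: "('t \<Rightarrow> 't \<Rightarrow> bool) \<Rightarrow> 't list \<Rightarrow> 't \<Rightarrow> 't \<Rightarrow> bool" where
  "walk ET p x y \<longleftrightarrow> p \<noteq> [] \<and> hd p = x \<and> last p = y \<and> successively ET p"

definition geodesic :: "('t \<Rightarrow> 't \<Rightarrow> bool) \<Rightarrow> 't list \<Rightarrow> 't \<Rightarrow> 't \<Rightarrow> bool" where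
  "geodesic ET p x y \<longleftrightarrow> walk ET p x y \<and> (\<forall>q. walk ET q x y \<longrightarrow> length p \<le> length q)"

lemma walk_append:
  assumes "walk ET p x y" "walk ET q y z"
  shows "walk ET (p @ tl q) x z"
proof -
  obtain q' where q: "q = y # q'"
    using assms(2) by (cases q) (auto simp: walk_def)
  then show ?thesis
    using assms by (cases q') (auto simp: walk_def successively_append_iff successively_Cons)
qed

lemma walk_exists: "ET\<^sup>*\<^sup>* x y \<Longrightarrow> \<exists>p. walk ET p x y"
proof (induction rule: rtranclp_induct)
  case base
  have "walk ET [x] x x" by (simp add: walk_def)
  then show ?case ..
next
  case (step y z)
  then obtain p where "walk ET p x y" by blast
  moreover have "walk ET [y, z] y z" using step.hyps(2) by (simp add: walk_def)
  ultimately show ?case by (blast dest: walk_append)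
qed

lemma geodesic_exists: "walk ET p x y \<Longrightarrow> \<exists>q. geodesic ET q x y"
  unfolding geodesic_def by (rule ex_has_least_nat)

lemma geodesic_length_eq: "geodesic ET p x y \<Longrightarrow> geodesic ET q x y \<Longrightarrow> length p = length q"
  by (auto simp: geodesic_def intro: antisym)

lemma walk_split:
  assumes "walk ET p x y" "i < length p"
  shows "walk ET (take (Suc i) p) x (p ! i)" "walk ET (drop i p) (p ! i) y"
proof -
  have "successively ET (take n p) \<and> successively ET (drop n p)" for n
    using assms(1) successively_append_iff[of ET "take n p" "drop n p"] by (simp add: walk_def)
  moreover have "last (take (Suc i) p) = p ! i"
    using take_Suc_conv_app_nth[OF assms(2)] by simp
  ultimately show "walk ET (take (Suc i) p) x (p ! i)" "walk ET (drop i p) (p ! i) y"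
    using assms by (auto simp: walk_def hd_drop_conv_nth)
qed

lemma geodesic_split:
  assumes "geodesic ET p x y" "i < length p"
  shows "geodesic ET (take (Suc i) p) x (p ! i)" "geodesic ET (drop i p) (p ! i) y"
proof -
  have p: "walk ET p x y" "\<And>q. walk ET q x y \<Longrightarrow> length p \<le> length q"
    using assms(1) by (auto simp: geodesic_def)
  have "length (take (Suc i) p) \<le> length q" if "walk ET q x (p ! i)" for q
    using p(2)[OF walk_append[OF that walk_split(2)[OF p(1) assms(2)]]] assms(2) by simp
  then show "geodesic ET (take (Suc i) p) x (p ! i)"
    using walk_split(1)[OF p(1) assms(2)] by (simp add: geodesic_def)
  have "length (drop i p) \<le> length q" if "walk ET q (p ! i) y" for q
    using p(2)[OF walk_append[OF walk_split(1)[OF p(1) assms(2)] that]] assms(2) that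
    by (cases q) (auto simp: walk_def)
  then show "geodesic ET (drop i p) (p ! i) y"
    using walk_split(2)[OF p(1) assms(2)] by (simp add: geodesic_def)
qed

lemma geodesic_nth_eq:
  assumes "geodesic ET p x y" "geodesic ET q x y'" "a < length p" "b < length q" "p ! a = q ! b"
  shows "a = b"
proof -
  have "geodesic ET (take (Suc b) q) x (p ! a)"
    using geodesic_split(1)[OF assms(2,4)] assms(5) by simp
  from geodesic_length_eq[OF geodesic_split(1)[OF assms(1,3)] this] show ?thesis
    using assms(3,4) by simp
qed

lemma geodesic_distinct: "geodesic ET p x y \<Longrightarrow> distinct p"
  by (auto simp: distinct_conv_nth dest: geodesic_nth_eq)

lemma is_tree_sym: "is_tree T ET \<Longrightarrow> ET a b \<Longrightarrow> ET b a"
  by (auto simp: is_tree_def simple_graph_def)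

lemma tree_no_cycle:
  assumes "is_tree T ET" "3 \<le> length c" "distinct c" "successively ET c" "ET (last c) (hd c)"
  shows False
  using assms by (auto simp: is_tree_def successively_conv_nth)

lemma tree_geodesic_unique:
  assumes tree: "is_tree T ET" and "geodesic ET p x y" "geodesic ET q x y"
  shows "p = q"
  using assms(2,3)
proof (induction "length p" arbitrary: p q x y rule: less_induct)
  txt \<open>If p and q share an interior vertex, split both there and use induction; otherwise p
    followed by the reversed interior of q is a cycle.\<close>
  case less
  have len: "length q = length p"
    using geodesic_length_eq[OF less.prems] by simp
  show "p = q"
  proof (cases "\<exists>a. 0 < a \<and> Suc a < length p \<and> p ! a = q ! a")
    case True
    then obtain a where a: "0 < a" "Suc a < length p" "p ! a = q ! a" by blast
    have "take (Suc a) p = take (Suc a) q"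
      using geodesic_split(1)[OF less.prems(1), of a] geodesic_split(1)[OF less.prems(2), of a] a len
      by (intro less.hyps) auto
    then have "take a p = take a q"
      by (metis le_SucI order_refl min.absorb1 take_take)
    moreover have "drop a p = drop a q"
      using geodesic_split(2)[OF less.prems(1), of a] geodesic_split(2)[OF less.prems(2), of a] a len
      by (intro less.hyps) auto
    ultimately show ?thesis
      by (metis append_take_drop_id)
  next
    case False
    have walks: "walk ET p x y" "walk ET q x y"
      using less.prems by (auto simp: geodesic_def)
    show ?thesis
    proof (rule ccontr)
      assume "p \<noteq> q"
      have long: "3 \<le> length p"
      proof (rule ccontr)
        assume "\<not> 3 \<le> length p"
        have "p ! i = q ! i" if "i < length p" for i
        proof -
          have "i = 0 \<or> i = length p - 1"
            using that \<open>\<not> 3 \<le> length p\<close> by arith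
          then show ?thesis
            using walks len by (auto simp: walk_def hd_conv_nth last_conv_nth)
        qed
        then have "p = q"
          using len by (simp add: nth_equalityI)
        with \<open>p \<noteq> q\<close> show False ..
      qed
      define m where "m = butlast (tl q)"
      have q: "q = x # m @ [y]"
        using walks(2) long len by (cases q) (auto simp: walk_def m_def)
      have "m \<noteq> []"
        using q len long by auto
      then have m: "distinct m" "successively ET m" "ET x (hd m)" "ET (last m) y"
        using q geodesic_distinct[OF less.prems(2)] walks(2)
        by (auto simp: walk_def successively_append_iff successively_Cons)
      have "p ! a \<noteq> m ! i" if "a < length p" "i < length m" for a i
      proof
        assume "p ! a = m ! i"
        then have "p ! a = q ! Suc i" by (simp add: q nth_append that(2))
        moreover from this have "a = Suc i"
          using geodesic_nth_eq[OF less.prems] that q by auto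
        ultimately have "p ! Suc i = q ! Suc i" by simp
        moreover have "Suc (Suc i) < length p"
          using that(2) len q by simp
        ultimately show False
          using False by blast
      qed
      then have disjoint: "set p \<inter> set m = {}"
        by (fastforce simp: in_set_conv_nth)
      have "successively ET (rev m)"
        using m(2) is_tree_sym[OF tree] by (auto intro: successively_mono)
      then have "successively ET (p @ rev m)"
        using walks(1) \<open>m \<noteq> []\<close> m is_tree_sym[OF tree]
        by (auto simp: walk_def successively_append_iff hd_rev)
      moreover have "ET (last (p @ rev m)) (hd (p @ rev m))"
        using walks(1) \<open>m \<noteq> []\<close> m is_tree_sym[OF tree] by (auto simp: walk_def last_rev)
      moreover have "distinct (p @ rev m)"
        using geodesic_distinct[OF less.prems(1)] m(1) disjoint by simp
      moreover have "3 \<le> length (p @ rev m)"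
        using long by simp
      ultimately show False
        using tree_no_cycle[OF tree] by blast
    qed
  qed
qed

lemma tree_geodesic_first_step:
  assumes tree: "is_tree T ET" and xy: "x \<in> T" "y \<in> T" "x \<noteq> y"
  obtains z where "ET x z"
    and "\<And>f. (\<And>a b. ET a b \<Longrightarrow> ET (f a) (f b)) \<Longrightarrow> f x = x \<Longrightarrow> f y = y \<Longrightarrow> f z = z"
proof -
  have "ET\<^sup>*\<^sup>* x y"
    using tree xy unfolding is_tree_def graph_connected_def by blast
  then obtain p0 where "walk ET p0 x y"
    by (blast dest: walk_exists)
  then obtain p where p: "geodesic ET p x y"
    by (blast dest: geodesic_exists)
  then have w: "walk ET p x y"
    by (simp add: geodesic_def)
  have long: "Suc 0 < length p"
    using w xy(3) by (cases p) (auto simp: walk_def)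
  have edge: "ET x (p ! 1)"
    using w successively_nth[of ET p 0] long by (auto simp: walk_def hd_conv_nth)
  show thesis
  proof (rule that[OF edge])
    fix f
    assume f: "\<And>a b. ET a b \<Longrightarrow> ET (f a) (f b)" "f x = x" "f y = y"
    have "walk ET (map f p) x y"
      using w f by (auto simp: walk_def hd_map last_map successively_map intro: successively_mono)
    then have "geodesic ET (map f p) x y"
      using p unfolding geodesic_def by simp
    then have "map f p = p"
      by (rule tree_geodesic_unique[OF tree _ p])
    then have "map f p ! 1 = p ! 1"
      by simp
    then show "f (p ! 1) = p ! 1"
      using long by simp
  qed
qed

lemma tree_action_fixes_edge:
  assumes "is_tree T ET" "tree_action G T ET \<phi>" "x \<in> T" "y \<in> T" "x \<noteq> y" "H \<subseteq> carrier G"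
    and "\<And>h. h \<in> H \<Longrightarrow> \<phi> h x = x \<and> \<phi> h y = y"
  obtains z where "ET x z" "\<And>h. h \<in> H \<Longrightarrow> \<phi> h x = x \<and> \<phi> h z = z"
proof -
  obtain z where edge: "ET x z"
    and fixed: "\<And>f. (\<And>a b. ET a b \<Longrightarrow> ET (f a) (f b)) \<Longrightarrow> f x = x \<Longrightarrow> f y = y \<Longrightarrow> f z = z"
    using tree_geodesic_first_step[OF assms(1,3-5)] by blast
  have "\<phi> h z = z" if "h \<in> H" for h
  proof (rule fixed)
    show "\<And>a b. ET a b \<Longrightarrow> ET (\<phi> h a) (\<phi> h b)"
      using assms(2,6) that unfolding tree_action_def by blast
  qed (use assms(7) that in auto)
  with edge show thesis
    using that assms(7) by blast
qed

lemma tree_action_group: "tree_action G T ET \<phi> \<Longrightarrow> group G"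
  by (auto simp: tree_action_def group_action_def group_hom_def)

lemma tree_action_subgroup_generated:
  assumes "tree_action G T ET \<phi>"
  shows "tree_action (subgroup_generated G S) T ET \<phi>"
proof -
  interpret group G using tree_action_group[OF assms] .
  have "\<phi> \<in> hom G (BijGroup T)"
    using assms by (simp add: tree_action_def group_action_def group_hom_def group_hom_axioms_def)
  then have "group_action (subgroup_generated G S) T \<phi>"
    by (simp add: group_action_def group_hom_def group_hom_axioms_def group_BijGroup
        hom_from_subgroup_generated)
  then show ?thesis
    using assms carrier_subgroup_generated_subset unfolding tree_action_def by blast
qed

lemma (in group_action) fixed_by_generate:
  assumes "x \<in> E" "S \<subseteq> carrier G" "\<And>s. s \<in> S \<Longrightarrow> \<phi> s x = x" "g \<in> generate G S"
  shows "\<phi> g x = x"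
proof -
  have "generate G S \<subseteq> stabilizer G \<phi> x"
    using assms(1-3) by (intro group.generate_subgroup_incl[OF group_hom.axioms(1)[OF group_hom]]
        stabilizer_subgroup) (auto simp: stabilizer_def)
  then show ?thesis
    using assms(4) by (auto simp: stabilizer_def)
qed

definition H_subgroup_fixes_edge ::
    "('a, 'm) monoid_scheme \<Rightarrow> ('t \<Rightarrow> 't \<Rightarrow> bool) \<Rightarrow> ('a \<Rightarrow> 't \<Rightarrow> 't) \<Rightarrow> bool" where
  "H_subgroup_fixes_edge G ET \<phi> \<longleftrightarrow>
     (\<exists>H x y. subgroup H G \<and> (G\<lparr>carrier := H\<rparr> \<cong> F2_group \<or> G\<lparr>carrier := H\<rparr> \<cong> Z2_group)
        \<and> ET x y \<and> (\<forall>h\<in>H. \<phi> h x = x \<and> \<phi> h y = y))"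

lemma prop_FH_iff:
  "prop_FH G TYPE('t) \<longleftrightarrow>
     (\<forall>(T :: 't set) ET \<phi>. is_tree T ET \<and> tree_action G T ET \<phi> \<longrightarrow>
        (\<exists>x\<in>T. \<forall>g\<in>carrier G. \<phi> g x = x) \<or> H_subgroup_fixes_edge G ET \<phi>)"
  by (simp add: prop_FH_def H_subgroup_fixes_edge_def)

lemma H_subgroup_fixes_edge_subgroup_generated:
  assumes "group G" "H_subgroup_fixes_edge (subgroup_generated G S) ET \<phi>"
  shows "H_subgroup_fixes_edge G ET \<phi>"
  using assms group.subgroup_subgroup_generated_iff[OF assms(1)]
  by (auto simp: H_subgroup_fixes_edge_def subgroup_generated_def)

lemma prop_FH_subgroup_generated_fixed_point:
  fixes T :: "'t set"
  assumes "prop_FH (subgroup_generated G S) TYPE('t)" "is_tree T ET" "tree_action G T ET \<phi>"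
    "\<not> H_subgroup_fixes_edge G ET \<phi>" "S \<subseteq> carrier G"
  shows "\<exists>x\<in>T. \<forall>s\<in>S. \<phi> s x = x"
proof -
  have "S \<subseteq> carrier (subgroup_generated G S)"
    using assms(5) by (auto simp: carrier_subgroup_generated intro: generate.incl)
  moreover have "\<not> H_subgroup_fixes_edge (subgroup_generated G S) ET \<phi>"
    using assms(4) H_subgroup_fixes_edge_subgroup_generated tree_action_group[OF assms(3)] by blast
  ultimately show ?thesis
    using assms(1-3) tree_action_subgroup_generated unfolding prop_FH_iff by blast
qed

section \<open>Propagation along a connected graph\<close>

lemma connected_graph_has_segment:
  assumes "3 \<le> card V" "simple_graph V E" "graph_connected V E"
  shows "\<exists>u v w. u \<noteq> w \<and> E u v \<and> E v w"
proof (rule ccontr)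
  assume "\<not> (\<exists>u v w. u \<noteq> w \<and> E u v \<and> E v w)"
  then have adjacent_twice: "u = w" if "E u v" "E v w" for u v w
    using that by blast
  obtain a where a: "a \<in> V"
    using assms(1) by fastforce
  have "\<not> V \<subseteq> {a}"
    using assms(1) card_mono[of "{a}" V] by auto
  then obtain b where b: "b \<in> V" "b \<noteq> a"
    by blast
  have "E\<^sup>*\<^sup>* a b"
    using assms(3) a b by (simp add: graph_connected_def)
  then obtain y where ay: "E a y"
    using b(2) by (cases rule: converse_rtranclpE) auto
  have "z \<in> {a, y}" if "E\<^sup>*\<^sup>* a z" for z
    using that
  proof (induction rule: rtranclp_induct)
    case (step z z')
    moreover have "E y a"
      using ay assms(2) by (simp add: simple_graph_def)
    ultimately show ?case
      using ay adjacent_twice by blast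
  qed simp
  then have "V \<subseteq> {a, y}"
    using assms(3) a by (auto simp: graph_connected_def)
  then have "card V \<le> 2"
    using card_mono[of "{a, y}" V] by (simp add: card_insert_if split: if_splits)
  then show False
    using assms(1) by simp
qed

lemma connected_graph_common_point:
  assumes "3 \<le> card V" "simple_graph V E" "graph_connected V E"
    and segment: "\<And>u v w. u \<noteq> w \<Longrightarrow> E u v \<Longrightarrow> E v w \<Longrightarrow> F u \<inter> F v \<inter> F w \<noteq> {}"
    and edge_unique: "\<And>u v q q'. E u v \<Longrightarrow> q \<in> F u \<inter> F v \<Longrightarrow> q' \<in> F u \<inter> F v \<Longrightarrow> q = q'"
  shows "\<exists>p. \<forall>v\<in>V. p \<in> F v"
proof -
  obtain a b c where "a \<noteq> c" "E a b" "E b c"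
    using connected_graph_has_segment[OF assms(1-3)] by blast
  then obtain p where ab: "E a b" "p \<in> F a" "p \<in> F b"
    using segment by blast
  have sym: "E v u" if "E u v" for u v
    using assms(2) that by (simp add: simple_graph_def)
  have propagate: "p \<in> F w" if uv: "E u v" "p \<in> F u" "p \<in> F v" and vw: "E v w" for u v w
  proof (cases "u = w")
    case False
    then obtain q where "q \<in> F u \<inter> F v \<inter> F w"
      using segment uv(1) vw by blast
    with edge_unique[OF uv(1)] uv(2,3) show ?thesis
      by blast
  qed (use uv in simp)
  have "p \<in> F v \<and> (\<forall>w. E v w \<longrightarrow> p \<in> F w)" if "E\<^sup>*\<^sup>* a v" for v
    using that
  proof (induction rule: rtranclp_induct)
    case base
    then show ?case
      using propagate[OF sym[OF ab(1)] ab(3,2)] ab(2) by blast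
  next
    case (step v v')
    then show ?case
      using propagate by blast
  qed
  moreover have "a \<in> V"
    using assms(2) ab(1) by (simp add: simple_graph_def)
  ultimately show ?thesis
    using assms(3) by (auto simp: graph_connected_def)
qed

lemma raag_gens_subset_carrier: "D \<subseteq> V \<Longrightarrow> raag_gen V E ` D \<subseteq> carrier (raag V E)"
  by (auto intro: raag_gen_carrier)

lemma raag_sub_eq_subgroup_generated:
  "D \<subseteq> V \<Longrightarrow> raag_sub V E D = subgroup_generated (raag V E) (raag_gen V E ` D)"
  using raag_gens_subset_carrier[of D V E]
  by (simp add: raag_sub_def subgroup_generated_def Int_absorb1)

lemma raag_sub_fixed_point:
  fixes T :: "'t set"
  assumes "D \<subseteq> V" "prop_FH (raag_sub V E D) TYPE('t)"
    and "is_tree T ET" "tree_action (raag V E) T ET \<phi>" "\<not> H_subgroup_fixes_edge (raag V E) ET \<phi>"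
  shows "\<exists>x\<in>T. \<forall>v\<in>D. \<phi> (raag_gen V E v) x = x"
  using prop_FH_subgroup_generated_fixed_point[OF _ assms(3-5) raag_gens_subset_carrier[OF assms(1)]]
    assms(1,2)
  by (simp add: raag_sub_eq_subgroup_generated)

lemma raag_fixed_by_gens:
  assumes "tree_action (raag V E) T ET \<phi>" "x \<in> T" "\<And>v. v \<in> V \<Longrightarrow> \<phi> (raag_gen V E v) x = x"
  shows "\<forall>g\<in>carrier (raag V E). \<phi> g x = x"
proof -
  interpret group_action "raag V E" T \<phi>
    using assms(1) by (simp add: tree_action_def)
  show ?thesis
    using fixed_by_generate[OF assms(2) raag_gens_subset_carrier[of V V E]] assms(3)
    by (auto simp: raag_generate_gens)
qed

lemma raag_adjacent_common_fixed_point_unique: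
  assumes "simple_graph V E" "E u v" "is_tree T ET" "tree_action (raag V E) T ET \<phi>"
    "\<not> H_subgroup_fixes_edge (raag V E) ET \<phi>"
    and x: "x \<in> T" "\<phi> (raag_gen V E u) x = x" "\<phi> (raag_gen V E v) x = x"
    and y: "y \<in> T" "\<phi> (raag_gen V E u) y = y" "\<phi> (raag_gen V E v) y = y"
  shows "x = y"
proof (rule ccontr)
  assume "x \<noteq> y"
  have uv: "u \<in> V" "v \<in> V" "u \<noteq> v"
    using assms(1,2) by (auto simp: simple_graph_def)
  interpret group_action "raag V E" T \<phi>
    using assms(4) unfolding tree_action_def by (rule conjunct1)
  define H where "H = generate (raag V E) {raag_gen V E u, raag_gen V E v}"
  have gens: "{raag_gen V E u, raag_gen V E v} \<subseteq> carrier (raag V E)"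
    using uv by (simp add: raag_gen_carrier)
  have H: "subgroup H (raag V E)"
    unfolding H_def using gens by (rule group.generate_is_subgroup[OF raag_is_group])
  have H_fixes: "\<phi> h x = x \<and> \<phi> h y = y" if "h \<in> H" for h
  proof
    show "\<phi> h x = x"
      using fixed_by_generate[OF x(1) gens _ that[unfolded H_def]] x(2,3) by auto
    show "\<phi> h y = y"
      using fixed_by_generate[OF y(1) gens _ that[unfolded H_def]] y(2,3) by auto
  qed
  obtain z where z: "ET x z" "\<And>h. h \<in> H \<Longrightarrow> \<phi> h x = x \<and> \<phi> h z = z"
    using tree_action_fixes_edge[OF assms(3,4) x(1) y(1) \<open>x \<noteq> y\<close> subgroup.subset[OF H] H_fixes]
    by blast
  have "(raag V E)\<lparr>carrier := H\<rparr> \<cong> Z2_group"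
    unfolding H_def using assms(2) uv by (rule raag_adjacent_gens_generate_Z2)
  then have "H_subgroup_fixes_edge (raag V E) ET \<phi>"
    unfolding H_subgroup_fixes_edge_def using H z by blast
  with assms(5) show False ..
qed

theorem proposition2p7:
  fixes V :: "'v set" and E :: "'v \<Rightarrow> 'v \<Rightarrow> bool" and \<G> :: "'v set set"
  assumes "finite V" and "card V \<ge> 3"
    and "simple_graph V E" and "graph_connected V E"
    and "\<forall>D\<in>\<G>. D \<subseteq> V"
    and "\<forall>D\<in>\<G>. prop_FH (raag_sub V E D) TYPE('t)"
    and "\<forall>u v w. u \<noteq> w \<and> E u v \<and> E v w \<longrightarrow> (\<exists>D\<in>\<G>. {u, v, w} \<subseteq> D)"
  shows "prop_FH (raag V E) TYPE('t)"
  unfolding prop_FH_iff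
proof (intro allI impI)
  fix T :: "'t set" and ET \<phi>
  assume "is_tree T ET \<and> tree_action (raag V E) T ET \<phi>"
  then have tree: "is_tree T ET" and act: "tree_action (raag V E) T ET \<phi>"
    by auto
  show "(\<exists>x\<in>T. \<forall>g\<in>carrier (raag V E). \<phi> g x = x) \<or> H_subgroup_fixes_edge (raag V E) ET \<phi>"
  proof (rule disjCI)
    assume no_edge: "\<not> H_subgroup_fixes_edge (raag V E) ET \<phi>"
    define F where "F v = {x \<in> T. \<phi> (raag_gen V E v) x = x}" for v
    have segment: "F u \<inter> F v \<inter> F w \<noteq> {}" if uvw: "u \<noteq> w" "E u v" "E v w" for u v w
    proof -
      obtain D where "D \<in> \<G>" "{u, v, w} \<subseteq> D"
        using assms(7) uvw by blast
      then show ?thesis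
        using raag_sub_fixed_point[OF _ _ tree act no_edge, of D] assms(5,6) by (fastforce simp: F_def)
    qed
    have edge_unique: "q = q'" if "E u v" "q \<in> F u \<inter> F v" "q' \<in> F u \<inter> F v" for u v q q'
      using raag_adjacent_common_fixed_point_unique[OF assms(3) that(1) tree act no_edge] that(2,3)
      by (simp add: F_def)
    have "\<exists>p. \<forall>v\<in>V. p \<in> F v"
      using assms(2-4) segment edge_unique by (rule connected_graph_common_point)
    then obtain p where "\<forall>v\<in>V. p \<in> F v" ..
    moreover have "V \<noteq> {}"
      using assms(2) by auto
    ultimately have "p \<in> T" "\<And>v. v \<in> V \<Longrightarrow> \<phi> (raag_gen V E v) p = p"
      by (auto simp: F_def)
    then show "\<exists>x\<in>T. \<forall>g\<in>carrier (raag V E). \<phi> g x = x"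
      using raag_fixed_by_gens[OF act] by blast
  qed
qed

end
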